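(* Let $p$ be a prime, $k$ even, and let $G=HN$ be the affine permutation group of degree $p^k$ with $N=\mathbb F_{p^k}$ acting by translations and $H=\mathrm{GL}_1(p^k)\langle\phi\rangle\le\Gamma\mathrm L_1(p^k)$, where $\phi$ is the field automorphism of $\mathbb F_{p^k}$ of order $2$. Then $G$ is a non-Frobenius $2$-transitive group and $\kappa(G)=2$.
   Context: A derangement is an element fixing no point; $\kappa(G)$ is the number of conjugacy classes of derangements. $\mathrm{GL}_1(p^k)=\mathbb F_{p^k}^\times$ acting by multiplication. *)

theory Defs
  imports Main "HOL-Computational_Algebra.Primes"
begin

text \<open>Permutation groups are represented as sets of functions on a finite type
 (acting on the whole type). All groups below consist of bijections.\<close>

definition derangement :: "('a \<Rightarrow> 'a) \<Rightarrow> bool" where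
  "derangement g \<longleftrightarrow> (\<forall>x. g x \<noteq> x)"

definition conj_class :: "('a \<Rightarrow> 'a) set \<Rightarrow> ('a \<Rightarrow> 'a) \<Rightarrow> ('a \<Rightarrow> 'a) set" where
  "conj_class G g = {h \<circ> g \<circ> inv h | h. h \<in> G}"

definition kappa :: "('a \<Rightarrow> 'a) set \<Rightarrow> nat" where
  "kappa G = card {conj_class G g | g. g \<in> G \<and> derangement g}"

definition transitive_perm :: "('a \<Rightarrow> 'a) set \<Rightarrow> bool" where
  "transitive_perm G \<longleftrightarrow> (\<forall>x y. \<exists>g\<in>G. g x = y)"

definition two_transitive :: "('a \<Rightarrow> 'a) set \<Rightarrow> bool" where
  "two_transitive G \<longleftrightarrow>
     (\<forall>x y u v. x \<noteq> y \<and> u \<noteq> v \<longrightarrow> (\<exists>g\<in>G. g x = u \<and> g y = v))"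

definition frobenius :: "('a \<Rightarrow> 'a) set \<Rightarrow> bool" where
  "frobenius G \<longleftrightarrow> transitive_perm G
     \<and> (\<exists>g\<in>G. g \<noteq> id \<and> (\<exists>x. g x = x))
     \<and> (\<forall>g\<in>G. g \<noteq> id \<longrightarrow> card {x. g x = x} \<le> 1)"

text \<open>The affine group  G = H N  with N the translations of the field and
 H = GL_1 \<langle>phi\<rangle>: maps x \<mapsto> a * phi^e(x) + b, a \<noteq> 0, e \<in> {0,1}.\<close>
definition affine_semilinear_group :: "('a::field \<Rightarrow> 'a) \<Rightarrow> ('a \<Rightarrow> 'a) set" where
  "affine_semilinear_group phi =
     {(\<lambda>x. a * ((phi ^^ e) x) + b) | a e b. a \<noteq> 0 \<and> e < (2::nat)}"

end

theory Submission
  imports Defs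
begin

text \<open>Every element of \<open>G\<close> is \<open>x \<mapsto> a x + b\<close> or \<open>x \<mapsto> a \<phi>(x) + b\<close>. The derangements of the
  first kind are the nontrivial translations, all conjugate under \<open>GL\<^sub>1\<close>. A map
  \<open>x \<mapsto> a \<phi>(x) + b\<close> without fixed points makes \<open>x \<mapsto> x - a \<phi>(x)\<close> non-surjective, hence
  non-injective on the finite field, so \<open>a = x\<^sub>0 / \<phi>(x\<^sub>0)\<close> (Hilbert 90), and conjugating
  by \<open>x \<mapsto> x / x\<^sub>0\<close> makes \<open>a = 1\<close>. The image of \<open>L(x) = x - \<phi>(x)\<close> is a subspace over the
  fixed field \<open>F\<^sub>0 = ker L\<close> of index \<open>|F\<^sub>0|\<close>, so for \<open>b\<close> outside it the translates
  \<open>c b + im L\<close>, \<open>c \<in> F\<^sub>0\<close>, cover the field; this makes all the maps \<open>x \<mapsto> \<phi>(x) + b\<close> with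
  \<open>b \<notin> im L\<close> conjugate. Conjugation preserves the two kinds, giving exactly two classes.
  Finally \<open>\<phi>\<close> itself lies in \<open>G\<close> and fixes \<open>0\<close> and \<open>1\<close>, so \<open>G\<close> is not Frobenius.\<close>

lemma derangement_conj:
  assumes "bij k" "derangement g"
  shows "derangement (k \<circ> g \<circ> inv k)"
  using assms unfolding derangement_def by (metis bij_inv_eq_iff comp_apply)

lemma conj_class_conj_subset:
  assumes comp_closed: "\<And>g h. g \<in> G \<Longrightarrow> h \<in> G \<Longrightarrow> g \<circ> h \<in> G"
    and bij: "\<And>g. g \<in> G \<Longrightarrow> bij g" and "k \<in> G"
  shows "conj_class G (k \<circ> g \<circ> inv k) \<subseteq> conj_class G g"
proof
  fix x assume "x \<in> conj_class G (k \<circ> g \<circ> inv k)"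
  then obtain h where "h \<in> G" and x: "x = h \<circ> (k \<circ> g \<circ> inv k) \<circ> inv h"
    unfolding conj_class_def by blast
  have "x = (h \<circ> k) \<circ> g \<circ> inv (h \<circ> k)"
    using x bij \<open>h \<in> G\<close> \<open>k \<in> G\<close> by (simp add: o_inv_distrib comp_assoc)
  then show "x \<in> conj_class G g"
    unfolding conj_class_def using comp_closed \<open>h \<in> G\<close> \<open>k \<in> G\<close> by blast
qed

lemma conj_class_conj:
  assumes comp_closed: "\<And>g h. g \<in> G \<Longrightarrow> h \<in> G \<Longrightarrow> g \<circ> h \<in> G"
    and inv_closed: "\<And>g. g \<in> G \<Longrightarrow> inv g \<in> G"
    and bij: "\<And>g. g \<in> G \<Longrightarrow> bij g" and "k \<in> G"
  shows "conj_class G (k \<circ> g \<circ> inv k) = conj_class G g"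
proof
  show "conj_class G (k \<circ> g \<circ> inv k) \<subseteq> conj_class G g"
    using comp_closed bij \<open>k \<in> G\<close> by (rule conj_class_conj_subset)
  have "g = inv k \<circ> (k \<circ> g \<circ> inv k) \<circ> inv (inv k)"
    using bij[OF \<open>k \<in> G\<close>] by (simp add: inv_inv_eq bij_is_inj bij_is_surj comp_assoc fun_eq_iff)
  then show "conj_class G g \<subseteq> conj_class G (k \<circ> g \<circ> inv k)"
    using conj_class_conj_subset[OF comp_closed bij inv_closed[OF \<open>k \<in> G\<close>]] by metis
qed

lemma mem_conj_class_self: "id \<in> G \<Longrightarrow> g \<in> conj_class G g"
  unfolding conj_class_def by (auto intro!: exI[of _ id])

lemma card_range_mult_card_kernel:
  fixes f :: "'a::{ab_group_add,finite} \<Rightarrow> 'b::ab_group_add"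
  assumes additive: "\<And>x y. f (x + y) = f x + f y"
  shows "card (range f) * card {x. f x = 0} = card (UNIV :: 'a set)"
proof -
  have f_diff: "f (z - x) = f z - f x" for z x
    using additive[of "z - x" x] by (simp add: algebra_simps)
  have fibre: "f -` {f x} = (\<lambda>k. x + k) ` {k. f k = 0}" for x
  proof (rule set_eqI)
    fix z
    have "z = x + (z - x)" by simp
    then show "z \<in> f -` {f x} \<longleftrightarrow> z \<in> (\<lambda>k. x + k) ` {k. f k = 0}"
      using f_diff[of z x] additive[of x] by (auto simp: image_iff)
  qed
  have card_fibre: "card (f -` {y}) = card {x. f x = 0}" if "y \<in> range f" for y
    using that fibre by (auto simp: card_image inj_on_def)
  have "card (UNIV :: 'a set) = card (\<Union>y\<in>range f. f -` {y})"
    by (rule arg_cong[of _ _ card]) auto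
  also have "\<dots> = (\<Sum>y\<in>range f. card (f -` {y}))"
    by (rule card_UN_disjoint) auto
  also have "\<dots> = card (range f) * card {x. f x = 0}"
    using card_fibre by simp
  finally show ?thesis by simp
qed

definition affine_map :: "'a::field \<Rightarrow> 'a \<Rightarrow> 'a \<Rightarrow> 'a" where
  "affine_map a b = (\<lambda>x. a * x + b)"

definition semiaffine_map :: "('a::field \<Rightarrow> 'a) \<Rightarrow> 'a \<Rightarrow> 'a \<Rightarrow> 'a \<Rightarrow> 'a" where
  "semiaffine_map phi a b = (\<lambda>x. a * phi x + b)"

lemma affine_semilinear_group_eq:
  "affine_semilinear_group phi =
     {affine_map a b | a b. a \<noteq> 0} \<union> {semiaffine_map phi a b | a b. a \<noteq> 0}"
proof -
  have "(\<exists>e<2::nat. g = (\<lambda>x. a * (phi ^^ e) x + b)) \<longleftrightarrow>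
      g = affine_map a b \<or> g = semiaffine_map phi a b" for g and a b :: 'a
    by (auto simp: less_2_cases_iff affine_map_def semiaffine_map_def)
  then show ?thesis
    unfolding affine_semilinear_group_def by blast
qed

lemma affine_map_comp: "affine_map a b \<circ> affine_map c d = affine_map (a * c) (a * d + b)"
  by (simp add: affine_map_def fun_eq_iff algebra_simps)

lemma affine_map_comp_semiaffine_map:
  "affine_map a b \<circ> semiaffine_map phi c d = semiaffine_map phi (a * c) (a * d + b)"
  by (simp add: affine_map_def semiaffine_map_def fun_eq_iff algebra_simps)

lemma affine_map_1_0: "affine_map 1 0 = id"
  by (simp add: affine_map_def fun_eq_iff)

lemma inv_affine_map: "a \<noteq> 0 \<Longrightarrow> inv (affine_map a b) = affine_map (inverse a) (- b / a)"
  by (rule inv_unique_comp) (simp_all add: affine_map_def fun_eq_iff field_simps)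

lemma bij_affine_map: "a \<noteq> 0 \<Longrightarrow> bij (affine_map a b)"
  by (rule o_bij[of "affine_map (inverse a) (- b / a)"])
     (simp_all add: affine_map_def fun_eq_iff field_simps)

lemma derangement_affine_map_iff: "derangement (affine_map a b) \<longleftrightarrow> a = 1 \<and> b \<noteq> 0"
proof
  assume der: "derangement (affine_map a b)"
  have "a = 1"
  proof (rule ccontr)
    assume "a \<noteq> 1"
    then have "affine_map a b (b / (1 - a)) = b / (1 - a)"
      by (simp add: affine_map_def field_simps)
    with der show False by (simp add: derangement_def)
  qed
  with der show "a = 1 \<and> b \<noteq> 0"
    by (auto simp: derangement_def affine_map_def)
qed (simp add: derangement_def affine_map_def)

lemma derangement_semiaffine_map_iff:
  "derangement (semiaffine_map phi a b) \<longleftrightarrow> b \<notin> range (\<lambda>x. x - a * phi x)"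
  by (auto simp: derangement_def semiaffine_map_def algebra_simps)

lemma affine_map_in_group: "a \<noteq> 0 \<Longrightarrow> affine_map a b \<in> affine_semilinear_group phi"
  by (auto simp: affine_semilinear_group_eq)

lemma semiaffine_map_in_group: "a \<noteq> 0 \<Longrightarrow> semiaffine_map phi a b \<in> affine_semilinear_group phi"
  by (auto simp: affine_semilinear_group_eq)

lemma two_transitive_affine_semilinear_group: "two_transitive (affine_semilinear_group phi)"
  unfolding two_transitive_def
proof (intro allI impI)
  fix x y u v :: 'a
  assume "x \<noteq> y \<and> u \<noteq> v"
  then have "x - y \<noteq> 0" "u - v \<noteq> 0" by auto
  define a where "a = (u - v) / (x - y)"
  have "a \<noteq> 0" "a * (x - y) = u - v"
    using \<open>x - y \<noteq> 0\<close> \<open>u - v \<noteq> 0\<close> by (simp_all add: a_def)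
  then have "affine_map a (u - a * x) \<in> affine_semilinear_group phi"
    and "affine_map a (u - a * x) x = u" and "affine_map a (u - a * x) y = v"
    by (simp_all add: affine_map_in_group) (simp_all add: affine_map_def algebra_simps)
  then show "\<exists>g\<in>affine_semilinear_group phi. g x = u \<and> g y = v" by blast
qed

locale involutive_field_automorphism =
  fixes phi :: "'a::field \<Rightarrow> 'a"
  assumes phi_add [simp]: "phi (x + y) = phi x + phi y"
    and phi_mult [simp]: "phi (x * y) = phi x * phi y"
    and phi_phi [simp]: "phi (phi x) = x"
begin

lemma phi_0 [simp]: "phi 0 = 0"
  by (metis add.right_neutral add_left_cancel phi_add)

lemma phi_minus [simp]: "phi (- x) = - phi x"
  using phi_add[of x "- x"] by (simp add: add_eq_0_iff2)

lemma phi_diff [simp]: "phi (x - y) = phi x - phi y"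
  using phi_add[of x "- y"] by simp

lemma phi_eq_0_iff [simp]: "phi x = 0 \<longleftrightarrow> x = 0"
  by (metis phi_0 phi_phi)

lemma phi_1 [simp]: "phi 1 = 1"
  using phi_mult[of 1 "phi 1"] by simp

lemma phi_inverse [simp]: "phi (inverse x) = inverse (phi x)"
proof (cases "x = 0")
  case False
  then have "phi x * phi (inverse x) = 1"
    using phi_mult[of x "inverse x"] by simp
  then show ?thesis by (metis inverse_unique)
qed simp

lemma phi_divide [simp]: "phi (x / y) = phi x / phi y"
  by (simp add: divide_inverse)

abbreviation G :: "('a \<Rightarrow> 'a) set" where
  "G \<equiv> affine_semilinear_group phi"

lemma semiaffine_map_comp_affine_map:
  "semiaffine_map phi a b \<circ> affine_map c d = semiaffine_map phi (a * phi c) (a * phi d + b)"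
  by (simp add: affine_map_def semiaffine_map_def fun_eq_iff algebra_simps)

lemma semiaffine_map_comp:
  "semiaffine_map phi a b \<circ> semiaffine_map phi c d = affine_map (a * phi c) (a * phi d + b)"
  by (simp add: affine_map_def semiaffine_map_def fun_eq_iff algebra_simps)

lemma inv_semiaffine_map:
  "a \<noteq> 0 \<Longrightarrow> inv (semiaffine_map phi a b) = semiaffine_map phi (inverse (phi a)) (- phi (b / a))"
  by (rule inv_unique_comp) (simp_all add: semiaffine_map_comp affine_map_def fun_eq_iff field_simps)

lemma bij_semiaffine_map: "a \<noteq> 0 \<Longrightarrow> bij (semiaffine_map phi a b)"
  by (rule o_bij[of "semiaffine_map phi (inverse (phi a)) (- phi (b / a))"])
     (simp_all add: semiaffine_map_comp affine_map_def fun_eq_iff field_simps)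

lemma affine_conj_semiaffine_map:
  assumes "c \<noteq> 0"
  shows "affine_map c d \<circ> semiaffine_map phi a b \<circ> inv (affine_map c d) =
    semiaffine_map phi (c * a / phi c) (c * b + d - c * a * phi d / phi c)"
  unfolding inv_affine_map[OF assms]
  using assms by (simp add: affine_map_def semiaffine_map_def fun_eq_iff field_simps)

lemma affine_semilinear_group_cases:
  assumes "g \<in> G"
  obtains a b where "a \<noteq> 0" "g = affine_map a b" | a b where "a \<noteq> 0" "g = semiaffine_map phi a b"
  using assms by (auto simp: affine_semilinear_group_eq)

lemma bij_if_in_group: "g \<in> G \<Longrightarrow> bij g"
  by (elim affine_semilinear_group_cases) (simp_all add: bij_affine_map bij_semiaffine_map)

lemma comp_in_group: "g \<in> G \<Longrightarrow> h \<in> G \<Longrightarrow> g \<circ> h \<in> G"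
  by (elim affine_semilinear_group_cases) (simp_all add: affine_map_comp affine_map_comp_semiaffine_map
      semiaffine_map_comp_affine_map semiaffine_map_comp affine_map_in_group semiaffine_map_in_group)

lemma inv_in_group: "g \<in> G \<Longrightarrow> inv g \<in> G"
  by (elim affine_semilinear_group_cases)
    (simp_all add: inv_affine_map inv_semiaffine_map affine_map_in_group semiaffine_map_in_group)

lemma id_in_group: "id \<in> G"
  using affine_map_in_group[of "1::'a" 0 phi] by (simp add: affine_map_1_0)

lemma conj_class_conj_in_group: "k \<in> G \<Longrightarrow> conj_class G (k \<circ> g \<circ> inv k) = conj_class G g"
  by (rule conj_class_conj) (simp_all add: comp_in_group inv_in_group bij_if_in_group)

lemma conj_semiaffine_map_is_semiaffine:
  assumes "h \<in> G"
  obtains a' b' where "h \<circ> semiaffine_map phi c d \<circ> inv h = semiaffine_map phi a' b'"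
  using assms
  by (elim affine_semilinear_group_cases) (auto simp: inv_affine_map inv_semiaffine_map affine_map_comp_semiaffine_map
      semiaffine_map_comp_affine_map semiaffine_map_comp)

lemma affine_map_neq_semiaffine_map:
  assumes "phi \<noteq> id" "a \<noteq> 0"
  shows "affine_map a b \<noteq> semiaffine_map phi c d"
proof
  assume eq: "affine_map a b = semiaffine_map phi c d"
  have "b = d" "a + b = c + d"
    using fun_cong[OF eq, of 0] fun_cong[OF eq, of 1] by (simp_all add: affine_map_def semiaffine_map_def)
  then have "a * x = a * phi x" for x
    using fun_cong[OF eq, of x] by (simp add: affine_map_def semiaffine_map_def)
  with \<open>a \<noteq> 0\<close> \<open>phi \<noteq> id\<close> show False by (simp add: fun_eq_iff)
qed

definition coboundary :: "'a \<Rightarrow> 'a" where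
  "coboundary x = x - phi x"

lemma coboundary_add: "coboundary (x + y) = coboundary x + coboundary y"
  by (simp add: coboundary_def)

lemma coboundary_scale: "phi c = c \<Longrightarrow> coboundary (c * x) = c * coboundary x"
  by (simp add: coboundary_def algebra_simps)

lemma coboundary_eq_0_iff: "coboundary x = 0 \<longleftrightarrow> phi x = x"
  by (auto simp: coboundary_def)

end

locale finite_field_involution = involutive_field_automorphism phi
  for phi :: "'a::{field,finite} \<Rightarrow> 'a"
begin

lemma not_frobenius_affine_semilinear_group:
  assumes "phi \<noteq> id"
  shows "\<not> frobenius G"
proof
  assume "frobenius G"
  have "phi \<in> G"
    using semiaffine_map_in_group[of "1::'a" phi 0] by (simp add: semiaffine_map_def)
  moreover have "card {0, 1::'a} \<le> card {x. phi x = x}"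
    by (intro card_mono) auto
  ultimately show False
    using \<open>frobenius G\<close> assms unfolding frobenius_def by fastforce
qed

lemma card_range_coboundary: "card (range coboundary) * card {c. phi c = c} = card (UNIV :: 'a set)"
  using card_range_mult_card_kernel[OF coboundary_add] by (simp add: coboundary_eq_0_iff)

lemma exists_not_coboundary: "\<exists>b. b \<notin> range coboundary"
proof -
  have "\<not> inj coboundary"
    by (metis coboundary_eq_0_iff injD phi_0 phi_1 zero_neq_one)
  then have "\<not> surj coboundary"
    using finite_UNIV_surj_inj[OF finite_UNIV] by blast
  then show ?thesis by blast
qed

lemma coboundary_cosets_cover:
  assumes "b \<notin> range coboundary"
  obtains c d where "phi c = c" "y = c * b + coboundary d"
proof -
  define F0 where "F0 = {c. phi c = c}"
  define coset where "coset c = (\<lambda>z. c * b + z) ` range coboundary" for c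
  have disjoint: "coset c \<inter> coset c' = {}" if "c \<in> F0" "c' \<in> F0" "c \<noteq> c'" for c c'
  proof (rule ccontr)
    assume "coset c \<inter> coset c' \<noteq> {}"
    then obtain d d' where "c * b + coboundary d = c' * b + coboundary d'"
      by (auto simp: coset_def)
    then have "coboundary (d' - d) = (c - c') * b"
      using coboundary_add[of d "d' - d"] by (simp add: algebra_simps)
    moreover have "phi (inverse (c - c')) = inverse (c - c')"
      using that by (simp add: F0_def)
    ultimately have "coboundary (inverse (c - c') * (d' - d)) = b"
      using that by (simp add: coboundary_scale)
    with assms show False by blast
  qed
  have "card (\<Union>c\<in>F0. coset c) = (\<Sum>c\<in>F0. card (coset c))"
    using disjoint by (intro card_UN_disjoint) auto
  also have "\<dots> = card F0 * card (range coboundary)"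
    by (simp add: coset_def card_image)
  also have "\<dots> = card (UNIV :: 'a set)"
    using card_range_coboundary by (simp add: F0_def mult.commute)
  finally have "(\<Union>c\<in>F0. coset c) = UNIV"
    by (intro card_subset_eq) auto
  then show thesis
    using that by (auto simp: F0_def coset_def)
qed

lemma nonzero_fixed_point_of_semilinear:
  assumes "\<not> surj (\<lambda>x. x - a * phi x)"
  obtains x where "x \<noteq> 0" "a * phi x = x"
proof -
  have "\<not> inj (\<lambda>x. x - a * phi x)"
    using assms finite_UNIV_inj_surj[OF finite_UNIV] by blast
  then obtain y z where "y \<noteq> z" "y - a * phi y = z - a * phi z"
    unfolding inj_def by blast
  then have "y - z \<noteq> 0" "a * phi (y - z) = y - z"
    by (simp_all add: algebra_simps)
  then show thesis by (rule that)
qed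

lemma conj_class_translation:
  assumes "b \<noteq> 0"
  shows "conj_class G (affine_map 1 b) = conj_class G (affine_map 1 1)"
proof -
  have "affine_map b 0 \<circ> affine_map 1 1 \<circ> inv (affine_map b 0) = affine_map 1 b"
    using assms by (simp add: inv_affine_map affine_map_comp)
  with assms show ?thesis
    by (metis conj_class_conj_in_group affine_map_in_group)
qed

lemma conj_class_semiaffine_derangement:
  assumes beta: "\<beta> \<notin> range coboundary"
    and "a \<noteq> 0" and der: "derangement (semiaffine_map phi a b)"
  shows "conj_class G (semiaffine_map phi a b) = conj_class G (semiaffine_map phi 1 \<beta>)"
proof -
  have "\<not> surj (\<lambda>x. x - a * phi x)"
    using der by (auto simp: derangement_semiaffine_map_iff)
  then obtain x0 where "x0 \<noteq> 0" "a * phi x0 = x0"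
    by (rule nonzero_fixed_point_of_semilinear)
  then have normalise:
    "affine_map (inverse x0) 0 \<circ> semiaffine_map phi a b \<circ> inv (affine_map (inverse x0) 0) =
      semiaffine_map phi 1 (b / x0)"
    by (simp add: affine_conj_semiaffine_map field_simps)
  then have "derangement (semiaffine_map phi 1 (b / x0))"
    using derangement_conj[OF bij_affine_map der, of "inverse x0" 0] \<open>x0 \<noteq> 0\<close> by simp
  then have "b / x0 \<notin> range coboundary"
    by (simp add: derangement_semiaffine_map_iff coboundary_def[abs_def])
  obtain c d where "phi c = c" and b_x0: "b / x0 = c * \<beta> + coboundary d"
    using coboundary_cosets_cover[OF beta] .
  have "c \<noteq> 0"
    using \<open>b / x0 \<notin> range coboundary\<close> b_x0 by auto
  then have recentre: "affine_map c d \<circ> semiaffine_map phi 1 \<beta> \<circ> inv (affine_map c d) =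
      semiaffine_map phi 1 (b / x0)"
    using \<open>phi c = c\<close> b_x0 by (simp add: affine_conj_semiaffine_map coboundary_def add_diff_eq)
  have "conj_class G (semiaffine_map phi a b) = conj_class G (semiaffine_map phi 1 (b / x0))"
    using conj_class_conj_in_group[OF affine_map_in_group] normalise \<open>x0 \<noteq> 0\<close>
    by (metis inverse_nonzero_iff_nonzero)
  also have "\<dots> = conj_class G (semiaffine_map phi 1 \<beta>)"
    using conj_class_conj_in_group[OF affine_map_in_group] recentre \<open>c \<noteq> 0\<close> by metis
  finally show ?thesis .
qed

lemma conj_class_translation_neq_semiaffine:
  assumes "phi \<noteq> id"
  shows "conj_class G (affine_map 1 1) \<noteq> conj_class G (semiaffine_map phi 1 \<beta>)"
proof
  assume "conj_class G (affine_map 1 1) = conj_class G (semiaffine_map phi 1 \<beta>)"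
  then have "affine_map 1 1 \<in> conj_class G (semiaffine_map phi 1 \<beta>)"
    using mem_conj_class_self[OF id_in_group] by metis
  then obtain h where "h \<in> G" and h: "affine_map 1 1 = h \<circ> semiaffine_map phi 1 \<beta> \<circ> inv h"
    unfolding conj_class_def by blast
  obtain a' b' where "h \<circ> semiaffine_map phi 1 \<beta> \<circ> inv h = semiaffine_map phi a' b'"
    using conj_semiaffine_map_is_semiaffine[OF \<open>h \<in> G\<close>] .
  with h show False
    using affine_map_neq_semiaffine_map[OF assms] by simp
qed

lemma kappa_affine_semilinear_group:
  assumes "phi \<noteq> id"
  shows "kappa G = 2"
proof -
  obtain \<beta> where beta: "\<beta> \<notin> range coboundary"
    using exists_not_coboundary by blast
  let ?C1 = "conj_class G (affine_map 1 1)"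
  let ?C2 = "conj_class G (semiaffine_map phi 1 \<beta>)"
  have classes: "conj_class G g \<in> {?C1, ?C2}" if "g \<in> G" "derangement g" for g
    using \<open>g \<in> G\<close>
  proof (cases rule: affine_semilinear_group_cases)
    case (1 a b)
    then have "a = 1" "b \<noteq> 0"
      using \<open>derangement g\<close> by (simp_all add: derangement_affine_map_iff)
    with 1 show ?thesis
      using conj_class_translation by blast
  next
    case (2 a b)
    then show ?thesis
      using \<open>derangement g\<close> conj_class_semiaffine_derangement[OF beta] by blast
  qed
  have "derangement (affine_map 1 (1::'a))" "derangement (semiaffine_map phi 1 \<beta>)"
    using beta by (simp_all add: derangement_affine_map_iff derangement_semiaffine_map_iff
        coboundary_def[abs_def])
  moreover have "affine_map 1 (1::'a) \<in> G" "semiaffine_map phi 1 \<beta> \<in> G"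
    by (simp_all add: affine_map_in_group semiaffine_map_in_group)
  ultimately have "{conj_class G g | g. g \<in> G \<and> derangement g} = {?C1, ?C2}"
    using classes by blast
  then show ?thesis
    unfolding kappa_def using conj_class_translation_neq_semiaffine[OF assms] by simp
qed

end

theorem proposition4p10:
  fixes phi :: "'a::{field,finite} \<Rightarrow> 'a" and p k :: nat
  assumes "prime p" and "even k" and "card (UNIV :: 'a set) = p ^ k"
    and "\<And>x y. phi (x + y) = phi x + phi y"
    and "\<And>x y. phi (x * y) = phi x * phi y"
    and "phi \<circ> phi = id" and "phi \<noteq> id"
  shows "two_transitive (affine_semilinear_group phi)
     \<and> \<not> frobenius (affine_semilinear_group phi)
     \<and> kappa (affine_semilinear_group phi) = 2"
proof -
  interpret finite_field_involution phi
    using assms(4-6) by unfold_locales (simp_all add: pointfree_idE)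
  show ?thesis
    using two_transitive_affine_semilinear_group not_frobenius_affine_semilinear_group[OF assms(7)]
      kappa_affine_semilinear_group[OF assms(7)] by blast
qed

end
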